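(* Let $(p_n)$ be a sequence in $(0,1)$ such that $\alpha=\lim_{n\to\infty}p_n\log n$ exists with $0<\alpha<\infty$, and let $\gamma>0$. For the torn-paper channel with block length $n$ and tearing probability $p_n$, let $\mathcal Y_\gamma$ be the collection of output fragments $\vec Y_i$ whose underlying length satisfies $N_{\pi_i}\ge\gamma\log n$, and $|\mathcal Y_\gamma|$ their number. Then for any $\epsilon>0$, $$\lim_{n\to\infty}\Pr\left(\big||\mathcal Y_\gamma| - e^{-\alpha\gamma} n p_n\big|>\epsilon n p_n\right)=0.$$
   Context: Logarithms are base 2. The torn-paper channel with block length $n$ and tearing probability $p_n$: the input $X^n\in\{0,1\}^n$ is cut into consecutive fragments $\vec X_1,\dots,\vec X_K$, where $N_1,N_2,\dots$ are i.i.d. $\mathrm{Geometric}(p_n)$ (support $\{1,2,\dots\}$, mean $1/p_n$), $K$ is the smallest index with $\sum_{i=1}^K N_i\ge n$, $\vec X_i$ consists of positions $1+\sum_{j<i}N_j$ through $\sum_{j\le i}N_j$ for $i<K$, and $\vec X_K$ of positions $1+\sum_{j<K}N_j$ through $n$. Given $K$, $\pi$ is a uniformly random permutation of $\{1,\dots,K\}$ and the output is the unordered collection $\{\vec Y_1,\dots,\vec Y_K\}$ with $\vec Y_i=\vec X_{\pi_i}$. Thus $|\mathcal Y_\gamma|=\sum_{i=1}^K \mathbf 1\{N_i\ge\gamma\log n\}$. *)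

theory Defs
  imports "HOL-Probability.Probability"
begin

definition geom1_pmf :: "real \<Rightarrow> nat pmf" where
  "geom1_pmf p = map_pmf Suc (geometric_pmf p)"

definition num_fragments :: "nat \<Rightarrow> (nat \<Rightarrow> nat) \<Rightarrow> nat" where
  "num_fragments n N = (LEAST k. real n \<le> (\<Sum>i=1..k. real (N i)))"

definition num_long_fragments :: "real \<Rightarrow> nat \<Rightarrow> (nat \<Rightarrow> nat) \<Rightarrow> nat" where
  "num_long_fragments \<gamma> n N =
     card {i \<in> {1..num_fragments n N}. real (N i) \<ge> \<gamma> * log 2 (real n)}"

end

theory Submission
  imports Defs "HOL-Real_Asymp.Real_Asymp"
begin

(*
  Write z = n p_n. The scaled lengths p_n N_i have mean 1 and variance 1 - p_n, so by Chebyshev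
  the first b = (1 + \<delta>) z fragments have total length at least n and the first a = (1 - \<delta>) z
  fragments total length less than n, with probability tending to 1. Then a < K \<le> b, and the
  number of long fragments is sandwiched between the numbers of long fragments among the first a
  and the first b. These are binomial with success probability
  q_n = P(N \<ge> \<gamma> log n) = (1 - p_n)^(\<lceil>\<gamma> log n\<rceil> - 1) \<longrightarrow> e^(-\<alpha>\<gamma>), and Chebyshev again puts
  them within \<delta> z of a q_n and b q_n, both of which are within \<delta> z + 1 of z q_n.
*)

lemma geometric_second_deriv_sums:
  fixes z :: real
  assumes "\<bar>z\<bar> < 1"
  shows "(\<lambda>n. real (Suc n) * real (Suc (Suc n)) * z ^ n) sums (2 / (1 - z) ^ 3)"
proof -
  have "(\<lambda>n. diffs (\<lambda>n. real (Suc n)) n * z ^ n) sums (2 / (1 - z) ^ 3)"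
  proof (rule termdiffs_sums_strong[where K = 1])
    show "(\<lambda>n. real (Suc n) * w ^ n) sums (1 / (1 - w) ^ 2)" if "norm w < 1" for w :: real
      using geometric_deriv_sums[of w] that by simp
    have "1 - z \<noteq> 0" using assms by auto
    then show "((\<lambda>w. 1 / (1 - w) ^ 2) has_field_derivative 2 / (1 - z) ^ 3) (at z)"
      by (auto intro!: derivative_eq_intros simp: divide_simps power2_eq_square power3_eq_cube)
  qed (use assms in auto)
  then show ?thesis by (simp add: diffs_def mult_ac)
qed

lemma geom1_pmf_expectation_sums:
  fixes f :: "nat \<Rightarrow> real"
  assumes p: "0 < p" "p \<le> 1"
    and sums: "(\<lambda>n. (1 - p) ^ n * p * f (Suc n)) sums s"
    and nonneg: "\<And>k. 0 \<le> f k"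
  shows "integrable (geom1_pmf p) f" and "measure_pmf.expectation (geom1_pmf p) f = s"
proof -
  have int: "integrable (count_space UNIV) (\<lambda>n. pmf (geometric_pmf p) n * f (Suc n))"
    using sums p nonneg unfolding integrable_count_space_nat_iff by (simp add: sums_iff)
  then have "integrable (geometric_pmf p) (\<lambda>n. f (Suc n))"
    unfolding measure_pmf_eq_density by (subst integrable_density) auto
  then show "integrable (geom1_pmf p) f"
    unfolding geom1_pmf_def by simp
  have "measure_pmf.expectation (geometric_pmf p) (\<lambda>n. f (Suc n)) =
      (\<integral>n. pmf (geometric_pmf p) n * f (Suc n) \<partial>count_space UNIV)"
    unfolding measure_pmf_eq_density by (subst integral_density) auto
  also have "\<dots> = s"
    using int sums p by (subst integral_count_space_nat) (simp_all add: sums_iff)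
  finally show "measure_pmf.expectation (geom1_pmf p) f = s"
    unfolding geom1_pmf_def by simp
qed

lemma
  assumes p: "0 < p" "p \<le> 1"
  shows integrable_geom1_pmf_square: "integrable (geom1_pmf p) (\<lambda>k. real k ^ 2)"
    and expectation_geom1_pmf: "measure_pmf.expectation (geom1_pmf p) real = 1 / p"
    and expectation_geom1_pmf_square:
      "measure_pmf.expectation (geom1_pmf p) (\<lambda>k. real k ^ 2) = (2 - p) / p ^ 2"
proof -
  have q: "\<bar>1 - p\<bar> < 1" using p by auto
  have first: "(\<lambda>n. (1 - p) ^ n * p * real (Suc n)) sums (1 / p)"
    using sums_mult[OF geometric_deriv_sums[of "1 - p"], of p] q p
    by (simp add: mult_ac power2_eq_square)
  have "(\<lambda>n. p * (real (Suc n) * real (Suc (Suc n)) * (1 - p) ^ n) - p * (real (Suc n) * (1 - p) ^ n))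
      sums (p * (2 / p ^ 3) - p * (1 / p ^ 2))"
    using geometric_second_deriv_sums[OF q] geometric_deriv_sums[of "1 - p"] q
    by (intro sums_diff sums_mult) simp_all
  moreover have "p * (2 / p ^ 3) - p * (1 / p ^ 2) = (2 - p) / p ^ 2"
    using p by (simp add: field_simps power2_eq_square power3_eq_cube)
  ultimately have second: "(\<lambda>n. (1 - p) ^ n * p * real (Suc n) ^ 2) sums ((2 - p) / p ^ 2)"
    by (simp add: algebra_simps power2_eq_square)
  show "integrable (geom1_pmf p) (\<lambda>k. real k ^ 2)"
    and "measure_pmf.expectation (geom1_pmf p) (\<lambda>k. real k ^ 2) = (2 - p) / p ^ 2"
    using geom1_pmf_expectation_sums[OF p second] by auto
  show "measure_pmf.expectation (geom1_pmf p) real = 1 / p"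
    using geom1_pmf_expectation_sums[OF p first] by auto
qed

lemma prob_geom1_pmf_ge:
  assumes p: "0 < p" "p \<le> 1" and t: "0 < t"
  shows "measure_pmf.prob (geom1_pmf p) {k. t \<le> real k} = (1 - p) ^ (nat \<lceil>t\<rceil> - 1)"
proof -
  define j where "j = nat \<lceil>t\<rceil> - 1"
  have "Suc k \<in> {k. t \<le> real k} \<longleftrightarrow> k \<in> UNIV - {..<j}" for k
  proof -
    have "t \<le> real (Suc k) \<longleftrightarrow> \<lceil>t\<rceil> \<le> int (Suc k)"
      using ceiling_le_iff[of t "int (Suc k)"] by simp
    moreover have "int j = \<lceil>t\<rceil> - 1"
      using t unfolding j_def by (simp add: of_nat_diff le_nat_iff)
    ultimately show ?thesis by simp linarith
  qed
  then have "Suc -` {k. t \<le> real k} = UNIV - {..<j}"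
    by blast
  then have "measure_pmf.prob (geom1_pmf p) {k. t \<le> real k} = measure_pmf.prob (geometric_pmf p) (UNIV - {..<j})"
    unfolding geom1_pmf_def measure_map_pmf by simp
  also have "\<dots> = 1 - measure_pmf.prob (geometric_pmf p) {..<j}"
    using measure_pmf.prob_compl[of "{..<j}" "geometric_pmf p"] by simp
  also have "measure_pmf.prob (geometric_pmf p) {..<j} = (\<Sum>k<j. (1 - p) ^ k * p)"
    using p by (subst measure_measure_pmf_finite) auto
  also have "\<dots> = 1 - (1 - p) ^ j"
    using p by (simp add: sum_distrib_right[symmetric] sum_gp_strict)
  finally show ?thesis unfolding j_def by simp
qed

lemma tendsto_one_minus_power_exp:
  fixes p :: "nat \<Rightarrow> real" and k :: "nat \<Rightarrow> nat"
  assumes p: "\<And>n. 0 < p n" "\<And>n. p n < 1" "p \<longlonglongrightarrow> 0"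
    and kp: "(\<lambda>n. real (k n) * p n) \<longlonglongrightarrow> c"
  shows "(\<lambda>n. (1 - p n) ^ k n) \<longlonglongrightarrow> exp (- c)"
proof -
  have "((\<lambda>x::real. ln (1 - x) / x) \<longlongrightarrow> -1) (at_right 0)"
    by real_asymp
  moreover have "filterlim p (at_right 0) sequentially"
    using p by (intro tendsto_imp_filterlim_at_right) auto
  ultimately have "(\<lambda>n. ln (1 - p n) / p n) \<longlonglongrightarrow> -1"
    by (rule filterlim_compose)
  then have "(\<lambda>n. exp (real (k n) * p n * (ln (1 - p n) / p n))) \<longlonglongrightarrow> exp (c * -1)"
    by (intro tendsto_intros kp)
  moreover have "exp (real (k n) * p n * (ln (1 - p n) / p n)) = (1 - p n) ^ k n" for n
  proof -
    have "exp (real (k n) * p n * (ln (1 - p n) / p n)) = exp (ln (1 - p n)) ^ k n"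
      using p(1)[of n] by (simp flip: exp_of_nat_mult)
    then show ?thesis using p(2)[of n] by simp
  qed
  ultimately show ?thesis by simp
qed

lemma times_log_tendsto_imp_tendsto_0:
  fixes p :: "nat \<Rightarrow> real"
  assumes lim: "(\<lambda>n. p n * log 2 (real n)) \<longlonglongrightarrow> \<alpha>"
  shows "p \<longlonglongrightarrow> 0"
proof -
  have "filterlim (\<lambda>n. log 2 (real n)) at_infinity sequentially"
    by (rule filterlim_at_top_imp_at_infinity) real_asymp
  with lim have "(\<lambda>n. p n * log 2 (real n) / log 2 (real n)) \<longlonglongrightarrow> 0"
    by (rule tendsto_divide_0)
  moreover have "eventually (\<lambda>n. p n * log 2 (real n) / log 2 (real n) = p n) sequentially"
    using eventually_gt_at_top[of 1]
  proof eventually_elim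
    case (elim n)
    then have "0 < log 2 (real n)" by simp
    then show ?case by simp
  qed
  ultimately show ?thesis by (rule Lim_transform_eventually)
qed

lemma times_log_tendsto_imp_filterlim_at_top:
  fixes p :: "nat \<Rightarrow> real"
  assumes lim: "(\<lambda>n. p n * log 2 (real n)) \<longlonglongrightarrow> \<alpha>" and \<alpha>: "0 < \<alpha>"
  shows "filterlim (\<lambda>n. real n * p n) at_top sequentially"
proof -
  have "filterlim (\<lambda>n. real n / log 2 (real n)) at_top sequentially"
    by real_asymp
  with lim \<alpha> have "filterlim (\<lambda>n. p n * log 2 (real n) * (real n / log 2 (real n))) at_top sequentially"
    by (rule filterlim_tendsto_pos_mult_at_top)
  moreover have "eventually (\<lambda>n. p n * log 2 (real n) * (real n / log 2 (real n)) = real n * p n) sequentially"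
    using eventually_gt_at_top[of 1]
  proof eventually_elim
    case (elim n)
    then have "0 < log 2 (real n)" by simp
    then show ?case by simp
  qed
  ultimately show ?thesis by (rule filterlim_cong[THEN iffD1, OF refl refl, rotated])
qed

lemma ceiling_log_times_tendsto:
  fixes p :: "nat \<Rightarrow> real"
  assumes lim: "(\<lambda>n. p n * log 2 (real n)) \<longlonglongrightarrow> \<alpha>"
    and p: "\<And>n. 0 < p n" and \<gamma>: "0 < \<gamma>"
  shows "(\<lambda>n. real (nat \<lceil>\<gamma> * log 2 (real n)\<rceil> - 1) * p n) \<longlonglongrightarrow> \<alpha> * \<gamma>"
proof -
  define k where "k n = nat \<lceil>\<gamma> * log 2 (real n)\<rceil> - 1" for n
  have "eventually (\<lambda>n. norm (real (k n) * p n - \<gamma> * (p n * log 2 (real n))) \<le> p n) sequentially"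
    using eventually_gt_at_top[of 1]
  proof eventually_elim
    case (elim n)
    define t where "t = \<gamma> * log 2 (real n)"
    have "0 < t" using elim \<gamma> by (simp add: t_def)
    then have "real (k n) = of_int \<lceil>t\<rceil> - 1"
      by (simp add: k_def t_def of_nat_diff le_nat_iff)
    then have "\<bar>real (k n) - t\<bar> \<le> 1"
      using ceiling_correct[of t] by linarith
    then have "p n * \<bar>real (k n) - t\<bar> \<le> p n"
      using p[of n] by (simp add: mult_left_le)
    moreover have "real (k n) * p n - \<gamma> * (p n * log 2 (real n)) = p n * (real (k n) - t)"
      by (simp add: t_def algebra_simps)
    ultimately show ?case
      using p[of n] by (simp add: abs_mult)
  qed
  then have "(\<lambda>n. real (k n) * p n - \<gamma> * (p n * log 2 (real n))) \<longlonglongrightarrow> 0"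
    using times_log_tendsto_imp_tendsto_0[OF lim] by (rule Lim_null_comparison)
  then have "(\<lambda>n. real (k n) * p n - \<gamma> * (p n * log 2 (real n)) + \<gamma> * (p n * log 2 (real n)))
      \<longlonglongrightarrow> 0 + \<gamma> * \<alpha>"
    by (intro tendsto_add tendsto_mult_left lim)
  then show ?thesis
    by (simp add: k_def mult.commute)
qed

lemma prob_geom1_pmf_ge_log_tendsto:
  fixes p :: "nat \<Rightarrow> real"
  assumes lim: "(\<lambda>n. p n * log 2 (real n)) \<longlonglongrightarrow> \<alpha>"
    and p: "\<And>n. 0 < p n" "\<And>n. p n < 1" and \<gamma>: "0 < \<gamma>"
  shows "(\<lambda>n. measure_pmf.prob (geom1_pmf (p n)) {k. \<gamma> * log 2 (real n) \<le> real k}) \<longlonglongrightarrow> exp (- \<alpha> * \<gamma>)"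
proof -
  have "(\<lambda>n. (1 - p n) ^ (nat \<lceil>\<gamma> * log 2 (real n)\<rceil> - 1)) \<longlonglongrightarrow> exp (- (\<alpha> * \<gamma>))"
    using tendsto_one_minus_power_exp[OF p times_log_tendsto_imp_tendsto_0[OF lim]
        ceiling_log_times_tendsto[OF lim p(1) \<gamma>]] .
  moreover have "eventually (\<lambda>n. (1 - p n) ^ (nat \<lceil>\<gamma> * log 2 (real n)\<rceil> - 1) =
      measure_pmf.prob (geom1_pmf (p n)) {k. \<gamma> * log 2 (real n) \<le> real k}) sequentially"
    using eventually_gt_at_top[of 1]
  proof eventually_elim
    case (elim n)
    then show ?case
      using p[of n] \<gamma> by (simp add: prob_geom1_pmf_ge less_imp_le)
  qed
  ultimately show ?thesis by (simp add: Lim_transform_eventually)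
qed

lemma (in prob_space) covariance_indep_vars:
  fixes X :: "'i \<Rightarrow> 'a \<Rightarrow> real"
  assumes indep: "indep_vars (\<lambda>_. borel) X I"
    and sq: "\<And>i. i \<in> I \<Longrightarrow> integrable M (\<lambda>x. X i x ^ 2)"
    and ij: "i \<in> I" "j \<in> I"
  shows "integrable M (\<lambda>x. (X i x - expectation (X i)) * (X j x - expectation (X j)))"
    and "expectation (\<lambda>x. (X i x - expectation (X i)) * (X j x - expectation (X j)))
      = (if i = j then variance (X i) else 0)"
proof -
  have [measurable]: "X k \<in> borel_measurable M" if "k \<in> I" for k
    using indep that unfolding indep_vars_def by blast
  have int: "integrable M (X k)" if "k \<in> I" for k
    using square_integrable_imp_integrable[OF _ sq] that by simp
  define Y where "Y k = (\<lambda>x. X k x - expectation (X k))" for k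
  have "integrable M (\<lambda>x. Y i x * Y j x) \<and> expectation (\<lambda>x. Y i x * Y j x) = (if i = j then variance (X i) else 0)"
  proof (cases "i = j")
    case True
    have "(\<lambda>x. Y i x * Y i x) = (\<lambda>x. X i x ^ 2 - 2 * expectation (X i) * X i x + expectation (X i) ^ 2)"
      by (auto simp: Y_def power2_eq_square algebra_simps)
    then show ?thesis
      using True sq[OF ij(1)] int[OF ij(1)] by (simp add: Y_def power2_eq_square)
  next
    case False
    have "indep_vars (\<lambda>_. borel) Y I"
      unfolding Y_def by (rule indep_vars_compose2[OF indep, where Y = "\<lambda>k x. x - expectation (X k)"]) auto
    then have indep_ij: "indep_vars (\<lambda>_. borel) Y {i, j}"
      by (rule indep_vars_subset) (use ij in auto)
    have int_Y: "integrable M (Y k)" and mean_Y: "expectation (Y k) = 0" if "k \<in> {i, j}" for k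
      using int ij that by (auto simp: Y_def prob_space)
    have "integrable M (\<lambda>x. \<Prod>k\<in>{i, j}. Y k x)"
      using indep_ij int_Y by (intro indep_vars_integrable) auto
    moreover have "expectation (\<lambda>x. \<Prod>k\<in>{i, j}. Y k x) = (\<Prod>k\<in>{i, j}. expectation (Y k))"
      using indep_ij int_Y by (intro indep_vars_lebesgue_integral) auto
    ultimately show ?thesis
      using False mean_Y by simp
  qed
  then show "integrable M (\<lambda>x. (X i x - expectation (X i)) * (X j x - expectation (X j)))"
    and "expectation (\<lambda>x. (X i x - expectation (X i)) * (X j x - expectation (X j)))
      = (if i = j then variance (X i) else 0)"
    by (simp_all add: Y_def)
qed

lemma (in prob_space) variance_sum_indep_vars:
  fixes X :: "'i \<Rightarrow> 'a \<Rightarrow> real"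
  assumes I: "finite I" and indep: "indep_vars (\<lambda>_. borel) X I"
    and sq: "\<And>i. i \<in> I \<Longrightarrow> integrable M (\<lambda>x. X i x ^ 2)"
  shows "integrable M (\<lambda>x. (\<Sum>i\<in>I. X i x) ^ 2)"
    and "variance (\<lambda>x. \<Sum>i\<in>I. X i x) = (\<Sum>i\<in>I. variance (X i))"
proof -
  have [measurable]: "X i \<in> borel_measurable M" if "i \<in> I" for i
    using indep that unfolding indep_vars_def by blast
  have int: "integrable M (X i)" if "i \<in> I" for i
    using square_integrable_imp_integrable[OF _ sq] that by simp
  define Y where "Y i x = X i x - expectation (X i)" for i x
  note cov = covariance_indep_vars[OF indep sq, folded Y_def]
  have square_sum: "(\<Sum>i\<in>I. Y i x) ^ 2 = (\<Sum>i\<in>I. \<Sum>j\<in>I. Y i x * Y j x)" for x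
    by (simp add: power2_eq_square sum_product)
  define c where "c = (\<Sum>i\<in>I. expectation (X i))"
  have sum_Y: "(\<Sum>i\<in>I. X i x) = (\<Sum>i\<in>I. Y i x) + c" for x
    by (simp add: Y_def c_def sum_subtractf)
  have "(\<lambda>x. (\<Sum>i\<in>I. X i x) ^ 2) = (\<lambda>x. (\<Sum>i\<in>I. \<Sum>j\<in>I. Y i x * Y j x) + 2 * c * (\<Sum>i\<in>I. Y i x) + c ^ 2)"
    unfolding sum_Y square_sum[symmetric] by (simp add: power2_eq_square algebra_simps)
  then show "integrable M (\<lambda>x. (\<Sum>i\<in>I. X i x) ^ 2)"
    using cov(1) int by (simp add: Y_def)
  have "expectation (\<lambda>x. \<Sum>i\<in>I. X i x) = c"
    using int by (simp add: c_def)
  then have "variance (\<lambda>x. \<Sum>i\<in>I. X i x) = expectation (\<lambda>x. \<Sum>i\<in>I. \<Sum>j\<in>I. Y i x * Y j x)"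
    by (simp add: sum_Y square_sum)
  also have "\<dots> = (\<Sum>i\<in>I. \<Sum>j\<in>I. if i = j then expectation (\<lambda>x. Y i x ^ 2) else 0)"
    using cov by (simp add: Bochner_Integration.integral_sum Bochner_Integration.integrable_sum)
  also have "\<dots> = (\<Sum>i\<in>I. variance (X i))"
    using I by (simp add: Y_def)
  finally show "variance (\<lambda>x. \<Sum>i\<in>I. X i x) = (\<Sum>i\<in>I. variance (X i))" .
qed

lemma (in prob_space) prob_indep_sum_deviation_le:
  fixes X :: "'i \<Rightarrow> 'a \<Rightarrow> real"
  assumes I: "finite I" and indep: "indep_vars (\<lambda>_. borel) X I"
    and sq: "\<And>i. i \<in> I \<Longrightarrow> integrable M (\<lambda>x. X i x ^ 2)"
    and mean: "\<And>i. i \<in> I \<Longrightarrow> expectation (X i) = \<mu>"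
    and var: "\<And>i. i \<in> I \<Longrightarrow> variance (X i) \<le> v"
    and e: "0 < e"
  shows "prob {x \<in> space M. e \<le> \<bar>(\<Sum>i\<in>I. X i x) - real (card I) * \<mu>\<bar>} \<le> real (card I) * v / e ^ 2"
proof -
  have [measurable]: "X i \<in> borel_measurable M" if "i \<in> I" for i
    using indep that unfolding indep_vars_def by blast
  note sum = variance_sum_indep_vars[OF I indep sq]
  have "integrable M (X i)" if "i \<in> I" for i
    using square_integrable_imp_integrable[OF _ sq[OF that]] that by simp
  then have "expectation (\<lambda>x. \<Sum>i\<in>I. X i x) = (\<Sum>i\<in>I. expectation (X i))"
    by (rule Bochner_Integration.integral_sum)
  also have "\<dots> = real (card I) * \<mu>"
    using mean by simp
  finally have "prob {x \<in> space M. e \<le> \<bar>(\<Sum>i\<in>I. X i x) - real (card I) * \<mu>\<bar>}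
      = prob {x \<in> space M. e \<le> \<bar>(\<Sum>i\<in>I. X i x) - expectation (\<lambda>x. \<Sum>i\<in>I. X i x)\<bar>}"
    by simp
  also have "\<dots> \<le> variance (\<lambda>x. \<Sum>i\<in>I. X i x) / e ^ 2"
    using e by (intro Chebyshev_inequality sum(1)) auto
  also have "\<dots> = (\<Sum>i\<in>I. variance (X i)) / e ^ 2"
    by (simp only: sum(2))
  also have "\<dots> \<le> real (card I) * v / e ^ 2"
    using var sum_bounded_above[of I "\<lambda>i. variance (X i)" v] by (intro divide_right_mono) auto
  finally show ?thesis .
qed

lemma (in prob_space) prob_indep_sum_deviation_tendsto_0:
  fixes X :: "nat \<Rightarrow> 'i \<Rightarrow> 'a \<Rightarrow> real" and I :: "nat \<Rightarrow> 'i set"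
  assumes fin: "\<And>n. finite (I n)"
    and indep: "\<And>n. indep_vars (\<lambda>_. borel) (X n) (I n)"
    and sq: "\<And>n i. i \<in> I n \<Longrightarrow> integrable M (\<lambda>x. X n i x ^ 2)"
    and mean: "\<And>n i. i \<in> I n \<Longrightarrow> expectation (X n i) = \<mu> n"
    and var: "\<And>n i. i \<in> I n \<Longrightarrow> variance (X n i) \<le> v"
    and r: "filterlim r at_top sequentially"
    and card: "eventually (\<lambda>n. real (card (I n)) \<le> c * r n) sequentially"
    and \<delta>: "0 < \<delta>"
  shows "(\<lambda>n. prob {x \<in> space M. \<delta> * r n \<le> \<bar>(\<Sum>i\<in>I n. X n i x) - real (card (I n)) * \<mu> n\<bar>}) \<longlonglongrightarrow> 0"
proof (rule tendsto_sandwich[OF _ _ tendsto_const])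
  define B where "B n = real (card (I n)) * v / (\<delta> * r n) ^ 2" for n
  have r_pos: "eventually (\<lambda>n. 0 < r n) sequentially"
    using r by (rule filterlim_at_top_dense[THEN iffD1, rule_format])
  then show "eventually (\<lambda>n. prob {x \<in> space M. \<delta> * r n \<le> \<bar>(\<Sum>i\<in>I n. X n i x) - real (card (I n)) * \<mu> n\<bar>}
      \<le> B n) sequentially"
    unfolding B_def using \<delta>
    by (auto elim!: eventually_mono intro!: prob_indep_sum_deviation_le fin indep sq mean var)
  have "eventually (\<lambda>n. norm (B n) \<le> \<bar>c * v\<bar> / \<delta>\<^sup>2 * inverse (r n)) sequentially"
    using card r_pos
  proof eventually_elim
    case (elim n)
    have "real (card (I n)) \<le> \<bar>c\<bar> * r n"
      using elim abs_ge_self[of c] by (meson less_imp_le mult_right_mono order_trans)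
    then have "\<bar>real (card (I n)) * v\<bar> \<le> \<bar>c * v\<bar> * r n"
      using mult_right_mono[of "real (card (I n))" "\<bar>c\<bar> * r n" "\<bar>v\<bar>"] by (simp add: abs_mult mult_ac)
    then have "norm (B n) \<le> \<bar>c * v\<bar> * r n / (\<delta> * r n) ^ 2"
      unfolding B_def by (simp add: divide_right_mono)
    also have "\<dots> = \<bar>c * v\<bar> / \<delta>\<^sup>2 * inverse (r n)"
      using elim \<delta> by (simp add: power2_eq_square divide_simps)
    finally show ?case .
  qed
  moreover have "(\<lambda>n. \<bar>c * v\<bar> / \<delta>\<^sup>2 * inverse (r n)) \<longlonglongrightarrow> 0"
    using tendsto_mult_left[OF tendsto_inverse_0_at_top[OF r], of "\<bar>c * v\<bar> / \<delta>\<^sup>2"]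
    by (simp only: mult_zero_right)
  ultimately show "B \<longlonglongrightarrow> 0"
    by (rule Lim_null_comparison)
qed (simp add: measure_nonneg)

lemma (in finite_measure) measure_tendsto_0_if_subset_finite_Union:
  assumes J: "finite J" and sets: "\<And>E n. E \<in> J \<Longrightarrow> E n \<in> sets M"
    and lim: "\<And>E. E \<in> J \<Longrightarrow> ((\<lambda>n. measure M (E n)) \<longlongrightarrow> 0) F"
    and sub: "eventually (\<lambda>n. B n \<subseteq> (\<Union>E\<in>J. E n)) F"
  shows "((\<lambda>n. measure M (B n)) \<longlongrightarrow> 0) F"
proof (rule tendsto_sandwich[OF _ _ tendsto_const])
  show "((\<lambda>n. \<Sum>E\<in>J. measure M (E n)) \<longlongrightarrow> 0) F"
    using lim by (rule tendsto_null_sum)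
  show "eventually (\<lambda>n. measure M (B n) \<le> (\<Sum>E\<in>J. measure M (E n))) F"
    using sub
  proof eventually_elim
    case (elim n)
    have "measure M (B n) \<le> measure M (\<Union>E\<in>J. E n)"
    proof (cases "B n \<in> sets M")
      case True
      then show ?thesis using elim J sets by (intro finite_measure_mono) auto
    qed (simp add: measure_notin_sets)
    also have "\<dots> \<le> (\<Sum>E\<in>J. measure M (E n))"
      using J sets by (intro finite_measure_subadditive_finite) auto
    finally show ?case .
  qed
qed simp

lemma num_fragments_between:
  fixes N :: "nat \<Rightarrow> nat"
  assumes a: "(\<Sum>i=1..a. real (N i)) < real n" and b: "real n \<le> (\<Sum>i=1..b. real (N i))"
  shows "a < num_fragments n N" and "num_fragments n N \<le> b"
proof -
  let ?P = "\<lambda>k. real n \<le> (\<Sum>i=1..k. real (N i))"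
  show "num_fragments n N \<le> b"
    unfolding num_fragments_def using b by (rule Least_le)
  have "?P (num_fragments n N)"
    unfolding num_fragments_def using b by (rule LeastI)
  moreover have "(\<Sum>i=1..k. real (N i)) \<le> (\<Sum>i=1..a. real (N i))" if "k \<le> a" for k
    using that by (intro sum_mono2) auto
  ultimately show "a < num_fragments n N"
    using a by (meson not_less order_trans not_le)
qed

definition num_long_first :: "real \<Rightarrow> nat \<Rightarrow> (nat \<Rightarrow> nat) \<Rightarrow> nat" where
  "num_long_first t m N = card {i \<in> {1..m}. t \<le> real (N i)}"

lemma num_long_fragments_eq_num_long_first:
  "num_long_fragments \<gamma> n N = num_long_first (\<gamma> * log 2 (real n)) (num_fragments n N) N"
  by (simp add: num_long_fragments_def num_long_first_def)

lemma num_long_first_mono: "m \<le> m' \<Longrightarrow> num_long_first t m N \<le> num_long_first t m' N"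
  unfolding num_long_first_def by (intro card_mono) auto

lemma num_long_first_eq_sum_indicator:
  "real (num_long_first t m N) = (\<Sum>i=1..m. indicator {k. t \<le> real k} (N i))"
  unfolding num_long_first_def by (simp add: indicator_def sum.If_cases Int_def)

lemma num_long_fragments_approx:
  fixes N :: "nat \<Rightarrow> nat" and n :: nat and p \<gamma> :: real
  defines "z \<equiv> real n * p" and "t \<equiv> \<gamma> * log 2 (real n)"
  assumes p: "0 < p" and q: "0 \<le> q" "q \<le> 1" and \<delta>: "0 \<le> \<delta>"
    and a: "(1 - \<delta>) * z - 1 \<le> real a" "real a \<le> (1 - \<delta>) * z"
    and b: "(1 + \<delta>) * z \<le> real b" "real b \<le> (1 + \<delta>) * z + 1"
    and length_a: "\<bar>p * (\<Sum>i=1..a. real (N i)) - real a\<bar> < \<delta> * z"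
    and length_b: "\<bar>p * (\<Sum>i=1..b. real (N i)) - real b\<bar> < \<delta> * z"
    and count_a: "\<bar>real (num_long_first t a N) - real a * q\<bar> < \<delta> * z"
    and count_b: "\<bar>real (num_long_first t b N) - real b * q\<bar> < \<delta> * z"
  shows "\<bar>real (num_long_fragments \<gamma> n N) - z * q\<bar> \<le> 2 * \<delta> * z + 1"
proof -
  have "p * (\<Sum>i=1..a. real (N i)) < p * real n"
    using length_a a(2) by (simp add: z_def algebra_simps abs_less_iff)
  moreover have "p * real n \<le> p * (\<Sum>i=1..b. real (N i))"
    using length_b b(1) by (simp add: z_def algebra_simps abs_less_iff)
  ultimately have "a < num_fragments n N" "num_fragments n N \<le> b"
    using p by (simp_all add: num_fragments_between)
  then have "num_long_first t a N \<le> num_long_fragments \<gamma> n N"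
    and "num_long_fragments \<gamma> n N \<le> num_long_first t b N"
    unfolding num_long_fragments_eq_num_long_first t_def by (simp_all add: num_long_first_mono)
  moreover have "((1 - \<delta>) * z - 1) * q \<le> real a * q" "real b * q \<le> ((1 + \<delta>) * z + 1) * q"
    using a(1) b(2) q(1) by (simp_all add: mult_right_mono)
  moreover have "\<delta> * z * q \<le> \<delta> * z"
    using p q \<delta> by (simp add: z_def mult_left_le)
  ultimately show ?thesis
    using count_a count_b q by (simp add: abs_le_iff abs_less_iff algebra_simps)
qed

locale torn_paper = prob_space M for M :: "'a measure" +
  fixes N :: "nat \<Rightarrow> nat \<Rightarrow> 'a \<Rightarrow> nat" and p :: "nat \<Rightarrow> real"
  assumes indep_N: "\<And>n. indep_vars (\<lambda>_. count_space UNIV) (N n) UNIV"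
    and distr_N: "\<And>n i. distr M (count_space UNIV) (N n i) = measure_pmf (geom1_pmf (p n))"
    and p_pos: "\<And>n. 0 < p n" and p_less_1: "\<And>n. p n < 1"
begin

lemma measurable_N [measurable]: "N n i \<in> measurable M (count_space UNIV)"
  using indep_N unfolding indep_vars_def by blast

lemma indep_vars_comp_N: "indep_vars (\<lambda>_. borel) (\<lambda>i \<omega>. f (N n i \<omega>)) I"
  by (rule indep_vars_subset[OF indep_vars_compose2[OF indep_N]]) auto

lemma integrable_comp_N_iff:
  "integrable M (\<lambda>\<omega>. f (N n i \<omega>)) \<longleftrightarrow> integrable (geom1_pmf (p n)) (f :: nat \<Rightarrow> real)"
  using integrable_distr_eq[OF measurable_N, of f] by (simp add: distr_N)

lemma expectation_comp_N:
  "expectation (\<lambda>\<omega>. f (N n i \<omega>)) = measure_pmf.expectation (geom1_pmf (p n)) (f :: nat \<Rightarrow> real)"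
  using integral_distr[OF measurable_N, of f] by (simp add: distr_N)

text \<open>Lengths are scaled by \<open>p n\<close>, so that both kinds of deviation are measured against the
  expected number \<open>n p\<^sub>n\<close> of fragments.\<close>

definition length_deviation :: "real \<Rightarrow> (nat \<Rightarrow> nat) \<Rightarrow> nat \<Rightarrow> 'a set" where
  "length_deviation \<delta> m n = {\<omega> \<in> space M.
     \<delta> * (real n * p n) \<le> \<bar>p n * (\<Sum>i=1..m n. real (N n i \<omega>)) - real (m n)\<bar>}"

definition count_deviation :: "(nat \<Rightarrow> real) \<Rightarrow> real \<Rightarrow> (nat \<Rightarrow> nat) \<Rightarrow> nat \<Rightarrow> 'a set" where
  "count_deviation t \<delta> m n = {\<omega> \<in> space M. \<delta> * (real n * p n) \<le>
     \<bar>real (num_long_first (t n) (m n) (\<lambda>i. N n i \<omega>))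
       - real (m n) * measure_pmf.prob (geom1_pmf (p n)) {k. t n \<le> real k}\<bar>}"

lemma length_deviation_in_events: "length_deviation \<delta> m n \<in> events"
  unfolding length_deviation_def by measurable

lemma count_deviation_in_events: "count_deviation t \<delta> m n \<in> events"
  unfolding count_deviation_def num_long_first_eq_sum_indicator by measurable

lemma prob_length_deviation_tendsto_0:
  assumes z: "filterlim (\<lambda>n. real n * p n) at_top sequentially"
    and m: "eventually (\<lambda>n. real (m n) \<le> c * (real n * p n)) sequentially" and \<delta>: "0 < \<delta>"
  shows "(\<lambda>n. prob (length_deviation \<delta> m n)) \<longlonglongrightarrow> 0"
proof -
  have square: "integrable M (\<lambda>\<omega>. (p n * real (N n i \<omega>)) ^ 2)" for n i
    using integrable_geom1_pmf_square[of "p n"] p_pos[of n] p_less_1[of n]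
    by (simp add: integrable_comp_N_iff[of "\<lambda>k. real k ^ 2"] power_mult_distrib)
  have mean: "expectation (\<lambda>\<omega>. p n * real (N n i \<omega>)) = 1" for n i
    using expectation_geom1_pmf[of "p n"] p_pos[of n] p_less_1[of n]
    by (simp add: expectation_comp_N[of real])
  have var: "variance (\<lambda>\<omega>. p n * real (N n i \<omega>)) \<le> 1" for n i
  proof -
    have "expectation (\<lambda>\<omega>. (p n * real (N n i \<omega>)) ^ 2) = p n ^ 2 * ((2 - p n) / p n ^ 2)"
      using expectation_geom1_pmf_square[of "p n"] p_pos[of n] p_less_1[of n]
      by (simp add: power_mult_distrib expectation_comp_N[of "\<lambda>k. real k ^ 2"])
    then have "variance (\<lambda>\<omega>. p n * real (N n i \<omega>)) = 1 - p n"
      using variance_eq[OF square_integrable_imp_integrable[OF _ square] square] mean p_pos[of n]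
      by simp
    then show ?thesis using p_pos[of n] by simp
  qed
  have "(\<lambda>n. prob {\<omega> \<in> space M. \<delta> * (real n * p n)
      \<le> \<bar>(\<Sum>i\<in>{1..m n}. p n * real (N n i \<omega>)) - real (card {1..m n}) * 1\<bar>}) \<longlonglongrightarrow> 0"
    using m by (intro prob_indep_sum_deviation_tendsto_0[where v = 1] indep_vars_comp_N square mean var z \<delta>) auto
  then show ?thesis by (simp add: length_deviation_def sum_distrib_left)
qed

lemma prob_count_deviation_tendsto_0:
  assumes z: "filterlim (\<lambda>n. real n * p n) at_top sequentially"
    and m: "eventually (\<lambda>n. real (m n) \<le> c * (real n * p n)) sequentially" and \<delta>: "0 < \<delta>"
  shows "(\<lambda>n. prob (count_deviation t \<delta> m n)) \<longlonglongrightarrow> 0"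
proof -
  define X :: "nat \<Rightarrow> nat \<Rightarrow> 'a \<Rightarrow> real"
    where "X n = (\<lambda>i \<omega>. indicator {k. t n \<le> real k} (N n i \<omega>))" for n
  have indep: "indep_vars (\<lambda>_. borel) (X n) I" for n I
    unfolding X_def by (rule indep_vars_comp_N)
  have X_square: "X n i \<omega> ^ 2 = X n i \<omega>" for n i \<omega>
    by (simp add: X_def indicator_def)
  have int: "integrable M (X n i)" for n i
    unfolding X_def by (intro integrable_const_bound[where B = 1]) (auto simp: indicator_def)
  then have square: "integrable M (\<lambda>\<omega>. X n i \<omega> ^ 2)" for n i
    by (simp add: X_square)
  have mean: "expectation (X n i) = measure_pmf.prob (geom1_pmf (p n)) {k. t n \<le> real k}" for n i
    unfolding X_def by (simp add: expectation_comp_N[of "indicator _"])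
  have var: "variance (X n i) \<le> 1" for n i
  proof -
    have "variance (X n i) = expectation (X n i) - expectation (X n i) ^ 2"
      using variance_eq[OF int square] by (simp add: X_square)
    moreover have "expectation (X n i) \<le> 1"
      unfolding mean by simp
    ultimately show ?thesis
      using zero_le_power2[of "expectation (X n i)"] by linarith
  qed
  have "(\<lambda>n. prob {\<omega> \<in> space M. \<delta> * (real n * p n) \<le> \<bar>(\<Sum>i\<in>{1..m n}. X n i \<omega>)
      - real (card {1..m n}) * measure_pmf.prob (geom1_pmf (p n)) {k. t n \<le> real k}\<bar>}) \<longlonglongrightarrow> 0"
    using m by (intro prob_indep_sum_deviation_tendsto_0[where v = 1] indep square mean var z \<delta>) auto
  then show ?thesis
    by (simp add: count_deviation_def X_def num_long_first_eq_sum_indicator)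
qed

definition lower_index :: "real \<Rightarrow> nat \<Rightarrow> nat" where
  "lower_index \<delta> n = nat \<lfloor>(1 - \<delta>) * (real n * p n)\<rfloor>"

definition upper_index :: "real \<Rightarrow> nat \<Rightarrow> nat" where
  "upper_index \<delta> n = nat \<lceil>(1 + \<delta>) * (real n * p n)\<rceil>"

lemma lower_index_bounds:
  assumes "\<delta> \<le> 1"
  shows "(1 - \<delta>) * (real n * p n) - 1 \<le> real (lower_index \<delta> n)"
    and "real (lower_index \<delta> n) \<le> (1 - \<delta>) * (real n * p n)"
proof -
  have "0 \<le> (1 - \<delta>) * (real n * p n)"
    using assms p_pos[of n] by simp
  then show "(1 - \<delta>) * (real n * p n) - 1 \<le> real (lower_index \<delta> n)"
    and "real (lower_index \<delta> n) \<le> (1 - \<delta>) * (real n * p n)"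
    unfolding lower_index_def by linarith+
qed

lemma upper_index_bounds:
  assumes "0 \<le> \<delta>"
  shows "(1 + \<delta>) * (real n * p n) \<le> real (upper_index \<delta> n)"
    and "real (upper_index \<delta> n) \<le> (1 + \<delta>) * (real n * p n) + 1"
proof -
  have "0 \<le> (1 + \<delta>) * (real n * p n)"
    using assms p_pos[of n] by simp
  then show "(1 + \<delta>) * (real n * p n) \<le> real (upper_index \<delta> n)"
    and "real (upper_index \<delta> n) \<le> (1 + \<delta>) * (real n * p n) + 1"
    unfolding upper_index_def by linarith+
qed

lemma eventually_index_le:
  assumes z: "filterlim (\<lambda>n. real n * p n) at_top sequentially" and \<delta>: "0 \<le> \<delta>" "\<delta> \<le> 1"
  shows "eventually (\<lambda>n. real (lower_index \<delta> n) \<le> 3 * (real n * p n)) sequentially"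
    and "eventually (\<lambda>n. real (upper_index \<delta> n) \<le> 3 * (real n * p n)) sequentially"
proof -
  have "eventually (\<lambda>n. 1 \<le> real n * p n) sequentially"
    using z by (simp add: filterlim_at_top)
  then have "eventually (\<lambda>n. real (lower_index \<delta> n) \<le> 3 * (real n * p n) \<and>
      real (upper_index \<delta> n) \<le> 3 * (real n * p n)) sequentially"
  proof eventually_elim
    case (elim n)
    have "0 \<le> \<delta> * (real n * p n)" "\<delta> * (real n * p n) \<le> real n * p n"
      using \<delta> elim mult_right_mono[OF \<delta>(2), of "real n * p n"] by simp_all
    then show ?case
      using elim lower_index_bounds(2)[OF \<delta>(2), of n] upper_index_bounds(2)[OF \<delta>(1), of n]
      by (simp add: algebra_simps)
  qed
  then show "eventually (\<lambda>n. real (lower_index \<delta> n) \<le> 3 * (real n * p n)) sequentially"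
    and "eventually (\<lambda>n. real (upper_index \<delta> n) \<le> 3 * (real n * p n)) sequentially"
    by (simp_all add: eventually_conj_iff)
qed

lemma num_long_fragments_deviation_subset:
  fixes n :: nat and \<gamma> \<delta> \<epsilon> c :: real
  defines "z \<equiv> real n * p n" and "t \<equiv> \<lambda>n. \<gamma> * log 2 (real n)"
    and "q \<equiv> measure_pmf.prob (geom1_pmf (p n)) {k. \<gamma> * log 2 (real n) \<le> real k}"
    and "a \<equiv> lower_index \<delta>" and "b \<equiv> upper_index \<delta>"
  assumes \<delta>: "0 \<le> \<delta>" "\<delta> \<le> 1" "\<delta> \<le> \<epsilon> / 4" and large: "4 \<le> \<epsilon> * z"
    and q_close: "\<bar>q - c\<bar> \<le> \<epsilon> / 4"
  shows "{\<omega> \<in> space M. \<bar>real (num_long_fragments \<gamma> n (\<lambda>i. N n i \<omega>)) - c * real n * p n\<bar> > \<epsilon> * real n * p n}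
    \<subseteq> length_deviation \<delta> a n \<union> length_deviation \<delta> b n \<union> count_deviation t \<delta> a n \<union> count_deviation t \<delta> b n"
    (is "_ \<subseteq> ?deviation")
proof
  fix \<omega>
  assume "\<omega> \<in> {\<omega> \<in> space M. \<bar>real (num_long_fragments \<gamma> n (\<lambda>i. N n i \<omega>)) - c * real n * p n\<bar> > \<epsilon> * real n * p n}"
  then have \<omega>: "\<omega> \<in> space M"
    and bad: "\<epsilon> * z < \<bar>real (num_long_fragments \<gamma> n (\<lambda>i. N n i \<omega>)) - c * z\<bar>"
    by (simp_all add: z_def mult.assoc)
  have "0 \<le> z" using p_pos[of n] by (simp add: z_def)
  have q_nonneg: "0 \<le> q" and q_le_1: "q \<le> 1"
    by (simp_all add: q_def)
  have "z * q - c * z = z * (q - c)"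
    by (simp add: algebra_simps)
  then have "\<bar>z * q - c * z\<bar> = z * \<bar>q - c\<bar>"
    using \<open>0 \<le> z\<close> by (simp add: abs_mult)
  also have "\<dots> \<le> z * (\<epsilon> / 4)"
    using \<open>0 \<le> z\<close> q_close by (intro mult_left_mono)
  finally have "2 * \<delta> * z + 1 + \<bar>z * q - c * z\<bar> \<le> \<epsilon> * z"
    using large mult_right_mono[OF \<delta>(3) \<open>0 \<le> z\<close>] by (simp add: algebra_simps)
  show "\<omega> \<in> ?deviation"
  proof (rule ccontr)
    assume "\<omega> \<notin> ?deviation"
    then have "\<bar>p n * (\<Sum>i=1..a n. real (N n i \<omega>)) - real (a n)\<bar> < \<delta> * (real n * p n)"
      "\<bar>p n * (\<Sum>i=1..b n. real (N n i \<omega>)) - real (b n)\<bar> < \<delta> * (real n * p n)"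
      "\<bar>real (num_long_first (\<gamma> * log 2 (real n)) (a n) (\<lambda>i. N n i \<omega>)) - real (a n) * q\<bar> < \<delta> * (real n * p n)"
      "\<bar>real (num_long_first (\<gamma> * log 2 (real n)) (b n) (\<lambda>i. N n i \<omega>)) - real (b n) * q\<bar> < \<delta> * (real n * p n)"
      using \<omega> by (auto simp: length_deviation_def count_deviation_def t_def q_def)
    from num_long_fragments_approx[OF p_pos q_nonneg q_le_1 \<delta>(1)
        lower_index_bounds[OF \<delta>(2)] upper_index_bounds[OF \<delta>(1)] this[unfolded a_def b_def]]
    have "\<bar>real (num_long_fragments \<gamma> n (\<lambda>i. N n i \<omega>)) - z * q\<bar> \<le> 2 * \<delta> * z + 1"
      by (simp add: z_def)
    then show False
      using bad \<open>2 * \<delta> * z + 1 + \<bar>z * q - c * z\<bar> \<le> \<epsilon> * z\<close>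
        abs_triangle_ineq[of "real (num_long_fragments \<gamma> n (\<lambda>i. N n i \<omega>)) - z * q" "z * q - c * z"]
      by linarith
  qed
qed

lemma prob_num_long_fragments_deviation_tendsto_0:
  assumes z: "filterlim (\<lambda>n. real n * p n) at_top sequentially"
    and q: "(\<lambda>n. measure_pmf.prob (geom1_pmf (p n)) {k. \<gamma> * log 2 (real n) \<le> real k}) \<longlonglongrightarrow> c"
    and \<epsilon>: "0 < \<epsilon>"
  shows "(\<lambda>n. prob {\<omega> \<in> space M. \<bar>real (num_long_fragments \<gamma> n (\<lambda>i. N n i \<omega>)) - c * real n * p n\<bar>
      > \<epsilon> * real n * p n}) \<longlonglongrightarrow> 0"
proof -
  define \<delta> where "\<delta> = min (\<epsilon> / 4) 1"
  define t where "t = (\<lambda>n. \<gamma> * log 2 (real n))"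
  define J where "J = {length_deviation \<delta> (lower_index \<delta>), length_deviation \<delta> (upper_index \<delta>),
    count_deviation t \<delta> (lower_index \<delta>), count_deviation t \<delta> (upper_index \<delta>)}"
  have \<delta>: "0 \<le> \<delta>" "\<delta> \<le> 1" "\<delta> \<le> \<epsilon> / 4" "0 < \<delta>"
    using \<epsilon> by (auto simp: \<delta>_def)
  note index_le = eventually_index_le[OF z \<delta>(1,2)]
  have lim: "(\<lambda>n. prob (E n)) \<longlonglongrightarrow> 0" if "E \<in> J" for E
    using that prob_length_deviation_tendsto_0[OF z index_le(1) \<delta>(4)]
      prob_length_deviation_tendsto_0[OF z index_le(2) \<delta>(4)]
      prob_count_deviation_tendsto_0[OF z index_le(1) \<delta>(4), of t]
      prob_count_deviation_tendsto_0[OF z index_le(2) \<delta>(4), of t]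
    unfolding J_def by blast
  have sets: "E n \<in> events" if "E \<in> J" for E n
    using that length_deviation_in_events count_deviation_in_events unfolding J_def by auto
  have "eventually (\<lambda>n. 4 / \<epsilon> \<le> real n * p n) sequentially"
    using z by (simp add: filterlim_at_top)
  moreover have "eventually (\<lambda>n. dist (measure_pmf.prob (geom1_pmf (p n)) {k. \<gamma> * log 2 (real n) \<le> real k}) c
      < \<epsilon> / 4) sequentially"
    using \<epsilon> by (intro tendstoD q) simp
  ultimately have sub: "eventually (\<lambda>n. {\<omega> \<in> space M.
      \<bar>real (num_long_fragments \<gamma> n (\<lambda>i. N n i \<omega>)) - c * real n * p n\<bar> > \<epsilon> * real n * p n}
      \<subseteq> (\<Union>E\<in>J. E n)) sequentially"
  proof eventually_elim
    case (elim n)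
    then have "4 \<le> \<epsilon> * (real n * p n)"
      and "\<bar>measure_pmf.prob (geom1_pmf (p n)) {k. \<gamma> * log 2 (real n) \<le> real k} - c\<bar> \<le> \<epsilon> / 4"
      using \<epsilon> by (simp_all add: dist_real_def field_simps)
    from num_long_fragments_deviation_subset[OF \<delta>(1-3) this, folded t_def]
    show ?case
      unfolding J_def by auto
  qed
  show ?thesis
  proof (rule measure_tendsto_0_if_subset_finite_Union)
    show "finite J" by (simp add: J_def)
  qed (use sets lim sub in blast)+
qed

end

theorem lemma4:
  fixes M :: "'a measure"
    and N :: "nat \<Rightarrow> nat \<Rightarrow> 'a \<Rightarrow> nat"
    and p :: "nat \<Rightarrow> real"
    and \<alpha> \<gamma> \<epsilon> :: real
  assumes M: "prob_space M"
    and indep: "\<And>n. prob_space.indep_vars M (\<lambda>_. count_space UNIV) (N n) UNIV"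
    and distr: "\<And>n i. distr M (count_space UNIV) (N n i) = measure_pmf (geom1_pmf (p n))"
    and p_range: "\<And>n. 0 < p n \<and> p n < 1"
    and lim: "(\<lambda>n. p n * log 2 (real n)) \<longlonglongrightarrow> \<alpha>"
    and \<alpha>_pos: "0 < \<alpha>"
    and \<gamma>_pos: "0 < \<gamma>"
    and \<epsilon>_pos: "0 < \<epsilon>"
  shows "(\<lambda>n. measure M {\<omega> \<in> space M.
            \<bar>real (num_long_fragments \<gamma> n (\<lambda>i. N n i \<omega>)) - exp (- \<alpha> * \<gamma>) * real n * p n\<bar>
              > \<epsilon> * real n * p n}) \<longlonglongrightarrow> 0"
proof -
  interpret torn_paper M N p
    using M indep distr p_range by (intro torn_paper.intro torn_paper_axioms.intro) auto
  have "filterlim (\<lambda>n. real n * p n) at_top sequentially"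
    using lim \<alpha>_pos by (rule times_log_tendsto_imp_filterlim_at_top)
  moreover have "(\<lambda>n. measure_pmf.prob (geom1_pmf (p n)) {k. \<gamma> * log 2 (real n) \<le> real k})
      \<longlonglongrightarrow> exp (- \<alpha> * \<gamma>)"
    using lim p_range \<gamma>_pos by (intro prob_geom1_pmf_ge_log_tendsto) auto
  ultimately show ?thesis
    using \<epsilon>_pos by (rule prob_num_long_fragments_deviation_tendsto_0)
qed

end
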